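(* Let $P$ be a $d$-polytope with slack ideal $I_P$ and non-incidence toric ideal $T_P$ (defined in the context). If a binomial $\mathbf x^{\mathbf a}-\mathbf x^{\mathbf b}$, with $\mathbf a,\mathbf b\in\mathbb{Z}_{\geq0}^t$, belongs to $I_P$, then it also belongs to $T_P$.
   Context: Let $P\subset\mathbb{R}^d$ be a $d$-dimensional polytope with labelled vertices $\mathbf p_1,\dots,\mathbf p_v$ and labelled facets $F_1,\dots,F_f$. The symbolic slack matrix $S_P(\mathbf x)$ is the $v\times f$ matrix with a $0$ in entry $(i,j)$ if $\mathbf p_i\in F_j$ and a distinct variable $x_{ij}$ otherwise; let $x_1,\dots,x_t$ denote all these variables. The slack ideal is $I_P=\langle (d+2)\text{-minors of } S_P(\mathbf x)\rangle : (x_1\cdots x_t)^\infty\subseteq\mathbb{C}[x_1,\dots,x_t]$. The non-incidence graph $G_P$ is the bipartite graph on the vertices and facets of $P$ with an edge $\{\mathbf p_i,F_j\}$ iff $\mathbf p_i\notin F_j$ (labelled by $x_{ij}$). $T_P$ is the toric ideal of the vertex-edge incidence matrix of $G_P$, i.e. the kernel of the map $x_{ij}\mapsto s_iu_j$ into $\mathbb{C}[s_1^{\pm1},\dots,s_v^{\pm1},u_1^{\pm1},\dots,u_f^{\pm1}]$. *)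

theory Defs
  imports "HOL-Analysis.Analysis" "HOL-Library.Poly_Mapping" "HOL-Combinatorics.Permutations"
begin

text \<open>Multivariate polynomials with complex coefficients in variables of type 'v:
  a polynomial is a finitely supported map from monomials (finitely supported exponent
  vectors 'v =>0 nat) to coefficients.\<close>
type_synonym 'v mpoly = "('v \<Rightarrow>\<^sub>0 nat) \<Rightarrow>\<^sub>0 complex"

definition mvar :: "'v \<Rightarrow> 'v mpoly" where
  "mvar x = Poly_Mapping.single (Poly_Mapping.single x 1) 1"

definition mmonom :: "('v \<Rightarrow>\<^sub>0 nat) \<Rightarrow> 'v mpoly" where
  "mmonom a = Poly_Mapping.single a 1"

definition poly_ring :: "'v set \<Rightarrow> 'v mpoly set" where
  "poly_ring X = {p. \<forall>m \<in> Poly_Mapping.keys p. Poly_Mapping.keys m \<subseteq> X}"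

definition ideal_gen :: "'v mpoly set \<Rightarrow> 'v mpoly set \<Rightarrow> 'v mpoly set" where
  "ideal_gen R G = {p. \<exists>S h. finite S \<and> S \<subseteq> G \<and> (\<forall>g\<in>S. h g \<in> R) \<and> p = (\<Sum>g\<in>S. h g * g)}"

definition saturation :: "'v mpoly set \<Rightarrow> 'v mpoly set \<Rightarrow> 'v mpoly \<Rightarrow> 'v mpoly set" where
  "saturation R I f = {p \<in> R. \<exists>n. f ^ n * p \<in> I}"

text \<open>Setting: P a d-polytope in R^d (d = DIM('a)), with vertices labelled
  pv 0, ..., pv (nv-1) and facets labelled Fc 0, ..., Fc (nf-1).\<close>
definition labelled_polytope ::
  "'a::euclidean_space set \<Rightarrow> nat \<Rightarrow> (nat \<Rightarrow> 'a) \<Rightarrow> nat \<Rightarrow> (nat \<Rightarrow> 'a set) \<Rightarrow> bool" where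
  "labelled_polytope P nv pv nf Fc \<longleftrightarrow>
     polytope P \<and> aff_dim P = int DIM('a) \<and>
     bij_betw pv {..<nv} {v. v extreme_point_of P} \<and>
     bij_betw Fc {..<nf} {F. F facet_of P}"

definition slack_vars :: "nat \<Rightarrow> (nat \<Rightarrow> 'a) \<Rightarrow> nat \<Rightarrow> (nat \<Rightarrow> 'a set) \<Rightarrow> (nat \<times> nat) set" where
  "slack_vars nv pv nf Fc = {(i, j). i < nv \<and> j < nf \<and> pv i \<notin> Fc j}"

definition sym_slack :: "(nat \<Rightarrow> 'a) \<Rightarrow> (nat \<Rightarrow> 'a set) \<Rightarrow> nat \<Rightarrow> nat \<Rightarrow> (nat \<times> nat) mpoly" where
  "sym_slack pv Fc i j = (if pv i \<in> Fc j then 0 else mvar (i, j))"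

definition minor :: "(nat \<Rightarrow> nat \<Rightarrow> 'r::comm_ring_1) \<Rightarrow> nat \<Rightarrow> (nat \<Rightarrow> nat) \<Rightarrow> (nat \<Rightarrow> nat) \<Rightarrow> 'r" where
  "minor M k r c = (\<Sum>\<pi> | \<pi> permutes {..<k}. of_int (sign \<pi>) * (\<Prod>l<k. M (r l) (c (\<pi> l))))"

definition minors :: "(nat \<Rightarrow> nat \<Rightarrow> 'r::comm_ring_1) \<Rightarrow> nat \<Rightarrow> nat \<Rightarrow> nat \<Rightarrow> 'r set" where
  "minors M nrows ncols k = {minor M k r c | r c.
      strict_mono_on {..<k} r \<and> r ` {..<k} \<subseteq> {..<nrows} \<and>
      strict_mono_on {..<k} c \<and> c ` {..<k} \<subseteq> {..<ncols}}"

definition slack_ideal ::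
  "nat \<Rightarrow> nat \<Rightarrow> (nat \<Rightarrow> 'a::euclidean_space) \<Rightarrow> nat \<Rightarrow> (nat \<Rightarrow> 'a set) \<Rightarrow> (nat \<times> nat) mpoly set" where
  "slack_ideal d nv pv nf Fc =
     (let X = slack_vars nv pv nf Fc; R = poly_ring X in
      saturation R (ideal_gen R (minors (sym_slack pv Fc) nv nf (d + 2))) (\<Prod>x\<in>X. mvar x))"

text \<open>Variables s_i (vertices) and u_j (facets) of the target ring.\<close>
datatype su_var = SV nat | UV nat

text \<open>Exponent of the image of x^m under x_ij |-> s_i u_j.\<close>
definition toric_exp :: "((nat \<times> nat) \<Rightarrow>\<^sub>0 nat) \<Rightarrow> (su_var \<Rightarrow>\<^sub>0 nat)" where
  "toric_exp m = (\<Sum>ij\<in>Poly_Mapping.keys m.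
      Poly_Mapping.single (SV (fst ij)) (Poly_Mapping.lookup m ij)
    + Poly_Mapping.single (UV (snd ij)) (Poly_Mapping.lookup m ij))"

text \<open>The C-algebra homomorphism x_ij |-> s_i u_j (extended linearly).\<close>
definition toric_map :: "(nat \<times> nat) mpoly \<Rightarrow> su_var mpoly" where
  "toric_map p = (\<Sum>m\<in>Poly_Mapping.keys p.
      Poly_Mapping.single (toric_exp m) (Poly_Mapping.lookup p m))"

definition toric_ideal :: "nat \<Rightarrow> (nat \<Rightarrow> 'a) \<Rightarrow> nat \<Rightarrow> (nat \<Rightarrow> 'a set) \<Rightarrow> (nat \<times> nat) mpoly set" where
  "toric_ideal nv pv nf Fc = {p \<in> poly_ring (slack_vars nv pv nf Fc). toric_map p = 0}"

end

theory Submission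
  imports Defs "Jordan_Normal_Form.Determinant"
begin

text \<open>
  Choose for every facet \<open>F\<^sub>j\<close> an inequality \<open>w\<^sub>j \<bullet> x \<le> \<beta>\<^sub>j\<close> defining it. For positive
  scalings \<open>s\<^sub>i\<close>, \<open>u\<^sub>j\<close> the real matrix with entries \<open>s\<^sub>i u\<^sub>j (\<beta>\<^sub>j - w\<^sub>j \<bullet> p\<^sub>i)\<close> has the zero
  pattern of the symbolic slack matrix and factors through \<open>\<real>\<^sup>d \<times> \<real>\<close>, so its \<open>(d+2)\<close>-minors
  vanish while the product of its nonzero entries does not: it is a zero of \<open>I\<^sub>P\<close>. There
  \<open>x\<^sup>a\<close> equals a positive constant \<open>C(a)\<close> times the product of the \<open>s\<^sub>i\<close> raised to the row sums
  of \<open>a\<close> and the \<open>u\<^sub>j\<close> raised to its column sums. Comparing \<open>x\<^sup>a\<close> with \<open>x\<^sup>b\<close> with all scalings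
  \<open>1\<close>, and then with a single scaling \<open>2\<close>, shows that \<open>a\<close> and \<open>b\<close> have the same row and
  column sums, which is to say the same image under \<open>x\<^sub>i\<^sub>j \<mapsto> s\<^sub>i u\<^sub>j\<close>.
\<close>

lemma minor_factorization_eq_0:
  fixes M :: "nat \<Rightarrow> nat \<Rightarrow> 'r::comm_ring_1"
  assumes M: "\<And>i j. M i j = (\<Sum>l<N. A i l * B l j)" and "N < k"
  shows "minor M k r c = 0"
proof -
  define A' where "A' = Matrix.mat k k (\<lambda>(x, y). if y < N then A (r x) y else 0)"
  define B' where "B' = Matrix.mat k k (\<lambda>(x, y). if x < N then B x (c y) else 0)"
  have A': "A' \<in> carrier_mat k k" and B': "B' \<in> carrier_mat k k"
    by (auto simp: A'_def B'_def)
  have prod_entry: "(A' * B') $$ (x, y) = M (r x) (c y)" if "x < k" "y < k" for x y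
  proof -
    have "(A' * B') $$ (x, y) = (\<Sum>z = 0..<k. if z < N then A (r x) z * B z (c y) else 0)"
      using that A' B' by (auto simp: scalar_prod_def A'_def B'_def intro: sum.cong)
    also have "\<dots> = (\<Sum>z\<in>{0..<k} \<inter> {z. z < N}. A (r x) z * B z (c y))"
      by (simp add: sum.inter_restrict)
    also have "{0..<k} \<inter> {z. z < N} = {..<N}"
      using \<open>N < k\<close> by auto
    finally show ?thesis
      using M by simp
  qed
  have "det B' = 0"
  proof -
    \<comment> \<open>Row \<open>N\<close> of \<open>B'\<close> is zero.\<close>
    have "(\<Prod>i = 0..<k. B' $$ (i, p i)) = 0" if "p permutes {0..<k}" for p
      using \<open>N < k\<close> permutes_in_image[OF that, of N]
      by (intro prod_zero bexI[of _ N]) (auto simp: B'_def)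
    then show ?thesis
      by (simp add: det_def'[OF B'])
  qed
  then have "det (A' * B') = 0"
    using det_mult[OF A' B'] by simp
  moreover have "det (A' * B') = minor M k r c"
    unfolding det_def'[OF mult_carrier_mat[OF A' B']] minor_def
    by (intro sum.cong) (auto simp: prod_entry atLeast0LessThan permutes_in_image)
  ultimately show ?thesis
    by simp
qed

lemma minor_cong:
  assumes "\<And>l l'. l < k \<Longrightarrow> l' < k \<Longrightarrow> M (r l) (c l') = M' (r l) (c l')"
  shows "minor M k r c = minor M' k r c"
  unfolding minor_def
proof (intro sum.cong prod.cong arg_cong2[where f = "(*)"] refl)
  fix \<pi> l
  assume "\<pi> \<in> {\<pi>. \<pi> permutes {..<k}}" and "l \<in> {..<k}"
  then show "M (r l) (c (\<pi> l)) = M' (r l) (c (\<pi> l))"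
    using assms permutes_in_image by fastforce
qed

lemma minor_scaled_affine_slack_eq_0:
  fixes p w :: "nat \<Rightarrow> 'a::euclidean_space" and \<beta> s u :: "nat \<Rightarrow> real"
  shows "minor (\<lambda>i j. complex_of_real (s i * u j * (\<beta> j - w j \<bullet> p i))) (DIM('a) + 2) r c = 0"
proof -
  obtain e where e: "bij_betw e {..<DIM('a)} (Basis :: 'a set)"
    using ex_bij_betw_nat_finite[of "Basis :: 'a set"] by (auto simp: atLeast0LessThan)
  define A where "A i l = complex_of_real (if l < DIM('a) then - s i * (p i \<bullet> e l) else s i)" for i l
  define B where "B l j = complex_of_real (if l < DIM('a) then u j * (w j \<bullet> e l) else u j * \<beta> j)" for l j
  have factorization:
    "complex_of_real (s i * u j * (\<beta> j - w j \<bullet> p i)) = (\<Sum>l<DIM('a) + 1. A i l * B l j)" for i j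
  proof -
    have inner: "(\<Sum>l<DIM('a). (p i \<bullet> e l) * (w j \<bullet> e l)) = w j \<bullet> p i"
      using sum.reindex_bij_betw[OF e, of "\<lambda>b. (p i \<bullet> b) * (w j \<bullet> b)"]
      by (simp add: euclidean_inner[of "p i" "w j"] inner_commute)
    have "(\<Sum>l<DIM('a) + 1. A i l * B l j)
        = complex_of_real (s i * u j * \<beta> j - s i * u j * (\<Sum>l<DIM('a). (p i \<bullet> e l) * (w j \<bullet> e l)))"
      by (simp add: A_def B_def sum_negf sum_distrib_left mult_ac)
    then show ?thesis
      by (simp add: inner right_diff_distrib)
  qed
  show ?thesis
    by (rule minor_factorization_eq_0[where A = A and B = B, OF factorization]) simp
qed

definition monom_eval :: "('v \<Rightarrow> 'b::comm_monoid_mult) \<Rightarrow> ('v \<Rightarrow>\<^sub>0 nat) \<Rightarrow> 'b" where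
  "monom_eval x m = (\<Prod>v\<in>Poly_Mapping.keys m. x v ^ Poly_Mapping.lookup m v)"

definition mpoly_eval :: "('v \<Rightarrow> complex) \<Rightarrow> 'v mpoly \<Rightarrow> complex" where
  "mpoly_eval x p = (\<Sum>m\<in>Poly_Mapping.keys p. Poly_Mapping.lookup p m * monom_eval x m)"

lemma monom_eval_superset:
  "finite S \<Longrightarrow> Poly_Mapping.keys m \<subseteq> S \<Longrightarrow>
    monom_eval x m = (\<Prod>v\<in>S. x v ^ Poly_Mapping.lookup m v)"
  unfolding monom_eval_def by (rule prod.mono_neutral_left) (auto simp: in_keys_iff)

lemma monom_eval_zero [simp]: "monom_eval x 0 = 1"
  by (simp add: monom_eval_def)

lemma monom_eval_add: "monom_eval x (m + n) = monom_eval x m * monom_eval x n"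
proof -
  let ?S = "Poly_Mapping.keys m \<union> Poly_Mapping.keys n"
  have "monom_eval x (m + n) = (\<Prod>v\<in>?S. x v ^ Poly_Mapping.lookup (m + n) v)"
    by (rule monom_eval_superset) (auto simp: keys_add)
  also have "\<dots> = (\<Prod>v\<in>?S. x v ^ Poly_Mapping.lookup m v) * (\<Prod>v\<in>?S. x v ^ Poly_Mapping.lookup n v)"
    by (simp add: lookup_add power_add prod.distrib)
  also have "\<dots> = monom_eval x m * monom_eval x n"
    by (subst (1 2) monom_eval_superset[of ?S]) auto
  finally show ?thesis .
qed

lemma monom_eval_mult_fun: "monom_eval (\<lambda>v. f v * g v) m = monom_eval f m * monom_eval g m"
  by (simp add: monom_eval_def power_mult_distrib prod.distrib)

lemma monom_eval_if_then_else_1: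
  "monom_eval (\<lambda>v. if Q v then t else 1) m
    = t ^ (\<Sum>v\<in>Poly_Mapping.keys m. if Q v then Poly_Mapping.lookup m v else 0)"
  unfolding monom_eval_def by (subst power_sum) (auto intro: prod.cong)

lemma monom_eval_pos:
  fixes x :: "'v \<Rightarrow> 'b::linordered_semidom"
  shows "(\<And>v. v \<in> Poly_Mapping.keys m \<Longrightarrow> x v > 0) \<Longrightarrow> monom_eval x m > 0"
  unfolding monom_eval_def by (auto intro!: prod_pos)

lemma monom_eval_of_real: "monom_eval (\<lambda>v. of_real (x v)) m = of_real (monom_eval x m)"
  by (simp add: monom_eval_def)

lemma mpoly_eval_superset:
  "finite S \<Longrightarrow> Poly_Mapping.keys p \<subseteq> S \<Longrightarrow>
    mpoly_eval x p = (\<Sum>m\<in>S. Poly_Mapping.lookup p m * monom_eval x m)"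
  unfolding mpoly_eval_def by (rule sum.mono_neutral_left) (auto simp: in_keys_iff)

lemma mpoly_eval_zero [simp]: "mpoly_eval x 0 = 0"
  by (simp add: mpoly_eval_def)

lemma mpoly_eval_add: "mpoly_eval x (p + q) = mpoly_eval x p + mpoly_eval x q"
proof -
  let ?S = "Poly_Mapping.keys p \<union> Poly_Mapping.keys q"
  have "mpoly_eval x (p + q) = (\<Sum>m\<in>?S. Poly_Mapping.lookup (p + q) m * monom_eval x m)"
    by (rule mpoly_eval_superset) (auto simp: keys_add)
  also have "\<dots> = (\<Sum>m\<in>?S. Poly_Mapping.lookup p m * monom_eval x m)
      + (\<Sum>m\<in>?S. Poly_Mapping.lookup q m * monom_eval x m)"
    by (simp add: lookup_add distrib_right sum.distrib)
  also have "\<dots> = mpoly_eval x p + mpoly_eval x q"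
    by (subst (1 2) mpoly_eval_superset[of ?S]) auto
  finally show ?thesis .
qed

lemma mpoly_eval_diff: "mpoly_eval x (p - q) = mpoly_eval x p - mpoly_eval x q"
  using mpoly_eval_add[of x p "- q"] by (simp add: mpoly_eval_def lookup_uminus sum_negf)

lemma mpoly_eval_single: "mpoly_eval x (Poly_Mapping.single m c) = c * monom_eval x m"
  by (cases "c = 0") (simp_all add: mpoly_eval_def)

lemma mpoly_eval_sum: "mpoly_eval x (\<Sum>i\<in>I. f i) = (\<Sum>i\<in>I. mpoly_eval x (f i))"
  by (induction I rule: infinite_finite_induct) (simp_all add: mpoly_eval_add)

lemma sum_single_lookup_keys:
  "(\<Sum>m\<in>Poly_Mapping.keys p. Poly_Mapping.single m (Poly_Mapping.lookup p m)) = p"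
  by (rule poly_mapping_eqI) (auto simp: lookup_sum lookup_single when_def in_keys_iff)

lemma mpoly_eval_mult: "mpoly_eval x (p * q) = mpoly_eval x p * mpoly_eval x q"
proof -
  have "p * q = (\<Sum>m\<in>Poly_Mapping.keys p. \<Sum>n\<in>Poly_Mapping.keys q.
      Poly_Mapping.single m (Poly_Mapping.lookup p m) * Poly_Mapping.single n (Poly_Mapping.lookup q n))"
    by (simp add: sum_single_lookup_keys flip: sum_product)
  then have "mpoly_eval x (p * q) = (\<Sum>m\<in>Poly_Mapping.keys p. \<Sum>n\<in>Poly_Mapping.keys q.
      (Poly_Mapping.lookup p m * monom_eval x m) * (Poly_Mapping.lookup q n * monom_eval x n))"
    by (simp add: mpoly_eval_sum mult_single mpoly_eval_single monom_eval_add mult_ac)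
  also have "\<dots> = mpoly_eval x p * mpoly_eval x q"
    by (simp add: mpoly_eval_def sum_product)
  finally show ?thesis .
qed

lemma mpoly_eval_one [simp]: "mpoly_eval x 1 = 1"
  using mpoly_eval_single[of x 0 1] by simp

lemma mpoly_eval_prod: "mpoly_eval x (\<Prod>i\<in>I. f i) = (\<Prod>i\<in>I. mpoly_eval x (f i))"
  by (induction I rule: infinite_finite_induct) (simp_all add: mpoly_eval_mult)

lemma mpoly_eval_power: "mpoly_eval x (p ^ n) = mpoly_eval x p ^ n"
  by (induction n) (simp_all add: mpoly_eval_mult)

lemma mpoly_eval_of_int: "mpoly_eval x (of_int z) = of_int z"
  using mpoly_eval_single[of x 0 "of_int z"] by simp

lemma mpoly_eval_mvar: "mpoly_eval x (mvar v) = x v"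
  by (simp add: mvar_def mpoly_eval_single monom_eval_def)

lemma mpoly_eval_mmonom: "mpoly_eval x (mmonom m) = monom_eval x m"
  by (simp add: mmonom_def mpoly_eval_single)

lemma mpoly_eval_minor: "mpoly_eval x (minor M k r c) = minor (\<lambda>i j. mpoly_eval x (M i j)) k r c"
  by (simp add: minor_def mpoly_eval_sum mpoly_eval_mult mpoly_eval_prod mpoly_eval_of_int)

lemma mpoly_eval_saturation_eq_0:
  assumes "p \<in> saturation R (ideal_gen R G) f"
    and "\<And>g. g \<in> G \<Longrightarrow> mpoly_eval x g = 0" and "mpoly_eval x f \<noteq> 0"
  shows "mpoly_eval x p = 0"
proof -
  obtain n S h where "S \<subseteq> G" and fp: "f ^ n * p = (\<Sum>g\<in>S. h g * g)"
    using assms(1) by (auto simp: saturation_def ideal_gen_def)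
  have "mpoly_eval x f ^ n * mpoly_eval x p = mpoly_eval x (\<Sum>g\<in>S. h g * g)"
    by (simp add: mpoly_eval_mult mpoly_eval_power flip: fp)
  also have "\<dots> = 0"
    unfolding mpoly_eval_sum mpoly_eval_mult using \<open>S \<subseteq> G\<close> assms(2)
    by (intro sum.neutral) auto
  finally have "mpoly_eval x f ^ n * mpoly_eval x p = 0" .
  then show ?thesis
    using assms(3) by simp
qed

definition facet_inequalities ::
  "nat \<Rightarrow> (nat \<Rightarrow> 'a::real_inner) \<Rightarrow> nat \<Rightarrow> (nat \<Rightarrow> 'a set) \<Rightarrow> (nat \<Rightarrow> 'a) \<Rightarrow> (nat \<Rightarrow> real) \<Rightarrow> bool"
  where "facet_inequalities nv pv nf Fc w \<beta> \<longleftrightarrow>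
    (\<forall>i<nv. \<forall>j<nf. w j \<bullet> pv i \<le> \<beta> j \<and> (w j \<bullet> pv i = \<beta> j \<longleftrightarrow> pv i \<in> Fc j))"

lemma labelled_polytope_facet_inequalities:
  fixes P :: "'a::euclidean_space set"
  assumes "labelled_polytope P nv pv nf Fc"
  obtains w \<beta> where "facet_inequalities nv pv nf Fc w \<beta>"
proof -
  have "polytope P" and pv: "bij_betw pv {..<nv} {v. v extreme_point_of P}"
    and Fc: "bij_betw Fc {..<nf} {F. F facet_of P}"
    using assms by (auto simp: labelled_polytope_def)
  have "\<exists>w \<beta>. P \<subseteq> {x. w \<bullet> x \<le> \<beta>} \<and> Fc j = P \<inter> {x. w \<bullet> x = \<beta>}" if "j < nf" for j
  proof -
    have "Fc j facet_of P"
      using bij_betw_apply[OF Fc] that by auto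
    then have "Fc j exposed_face_of P"
      using \<open>polytope P\<close> exposed_face_of_polyhedron facet_of_imp_face_of polytope_imp_polyhedron
      by blast
    then show ?thesis
      unfolding exposed_face_of_def by blast
  qed
  then obtain w \<beta> where wb: "\<And>j. j < nf \<Longrightarrow> P \<subseteq> {x. w j \<bullet> x \<le> \<beta> j} \<and> Fc j = P \<inter> {x. w j \<bullet> x = \<beta> j}"
    by metis
  have "pv i \<in> P" if "i < nv" for i
    using bij_betw_apply[OF pv] that by (auto simp: extreme_point_of_def)
  with wb show ?thesis
    by (intro that) (auto simp: facet_inequalities_def)
qed

lemma facet_inequalities_slack_pos:
  fixes w :: "nat \<Rightarrow> 'a::real_inner"
  assumes "facet_inequalities nv pv nf Fc w \<beta>" and "(i, j) \<in> slack_vars nv pv nf Fc"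
  shows "0 < \<beta> j - w j \<bullet> pv i"
proof -
  have "i < nv" "j < nf" "pv i \<notin> Fc j"
    using assms(2) by (auto simp: slack_vars_def)
  then have "w j \<bullet> pv i \<le> \<beta> j" "w j \<bullet> pv i \<noteq> \<beta> j"
    using assms(1) by (auto simp: facet_inequalities_def)
  then show ?thesis
    by linarith
qed

lemma slack_ideal_vanishes_at_scaled_slack_matrix:
  fixes pv w :: "nat \<Rightarrow> 'a::euclidean_space" and s u :: "nat \<Rightarrow> real"
  assumes ineqs: "facet_inequalities nv pv nf Fc w \<beta>"
    and s: "\<And>i. s i > 0" and u: "\<And>j. u j > 0"
    and "p \<in> slack_ideal DIM('a) nv pv nf Fc"
  shows "mpoly_eval (\<lambda>(i, j). complex_of_real (s i * u j * (\<beta> j - w j \<bullet> pv i))) p = 0"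
proof -
  let ?x = "\<lambda>(i, j). complex_of_real (s i * u j * (\<beta> j - w j \<bullet> pv i))"
  let ?X = "slack_vars nv pv nf Fc"
  have eval_slack: "mpoly_eval ?x (sym_slack pv Fc i j) = ?x (i, j)" if "i < nv" "j < nf" for i j
  proof -
    have "pv i \<in> Fc j \<longleftrightarrow> w j \<bullet> pv i = \<beta> j"
      using ineqs that by (simp add: facet_inequalities_def)
    then show ?thesis
      by (auto simp: sym_slack_def mpoly_eval_mvar)
  qed
  have "mpoly_eval ?x g = 0" if g_minor: "g \<in> minors (sym_slack pv Fc) nv nf (DIM('a) + 2)" for g
  proof -
    obtain r c where g: "g = minor (sym_slack pv Fc) (DIM('a) + 2) r c"
      and rc: "r ` {..<DIM('a) + 2} \<subseteq> {..<nv}" "c ` {..<DIM('a) + 2} \<subseteq> {..<nf}"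
      using g_minor unfolding minors_def by blast
    have "mpoly_eval ?x g = minor (\<lambda>i j. ?x (i, j)) (DIM('a) + 2) r c"
      unfolding g mpoly_eval_minor
    proof (rule minor_cong)
      fix l l'
      assume "l < DIM('a) + 2" and "l' < DIM('a) + 2"
      then show "mpoly_eval ?x (sym_slack pv Fc (r l) (c l')) = ?x (r l, c l')"
        using rc by (intro eval_slack) auto
    qed
    then show ?thesis
      using minor_scaled_affine_slack_eq_0[where p = pv and w = w and \<beta> = \<beta> and s = s and u = u]
      by simp
  qed
  moreover have "mpoly_eval ?x (\<Prod>v\<in>?X. mvar v) \<noteq> 0"
  proof -
    have "finite ?X"
      by (rule finite_subset[of _ "{..<nv} \<times> {..<nf}"]) (auto simp: slack_vars_def)
    moreover have "?x v \<noteq> 0" if "v \<in> ?X" for v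
      using facet_inequalities_slack_pos[OF ineqs, of "fst v" "snd v"] s[of "fst v"] u[of "snd v"] that
      by (simp add: case_prod_beta)
    ultimately show ?thesis
      by (simp add: mpoly_eval_prod mpoly_eval_mvar)
  qed
  ultimately show ?thesis
    using assms(4) by (auto simp: slack_ideal_def Let_def intro: mpoly_eval_saturation_eq_0)
qed

lemma slack_ideal_binomial_scaled_monom_evals_eq:
  fixes pv w :: "nat \<Rightarrow> 'a::euclidean_space" and s u :: "nat \<Rightarrow> real"
  assumes "facet_inequalities nv pv nf Fc w \<beta>" and "\<And>i. s i > 0" and "\<And>j. u j > 0"
    and "mmonom a - mmonom b \<in> slack_ideal DIM('a) nv pv nf Fc"
  defines "y \<equiv> \<lambda>(i, j). s i * u j * (\<beta> j - w j \<bullet> pv i)"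
  shows "monom_eval y a = monom_eval y b"
proof -
  have "mpoly_eval (\<lambda>v. complex_of_real (y v)) (mmonom a - mmonom b) = 0"
    using slack_ideal_vanishes_at_scaled_slack_matrix[OF assms(1-4)] by (simp add: y_def split_def)
  then have "complex_of_real (monom_eval y a) = complex_of_real (monom_eval y b)"
    by (simp only: mpoly_eval_diff mpoly_eval_mmonom monom_eval_of_real right_minus_eq)
  then show ?thesis
    by simp
qed

lemma lookup_toric_exp_SV:
  "Poly_Mapping.lookup (toric_exp m) (SV i)
    = (\<Sum>v\<in>Poly_Mapping.keys m. if fst v = i then Poly_Mapping.lookup m v else 0)"
  by (simp add: toric_exp_def lookup_sum lookup_add lookup_single when_def)

lemma lookup_toric_exp_UV:
  "Poly_Mapping.lookup (toric_exp m) (UV j)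
    = (\<Sum>v\<in>Poly_Mapping.keys m. if snd v = j then Poly_Mapping.lookup m v else 0)"
  by (simp add: toric_exp_def lookup_sum lookup_add lookup_single when_def)

lemma toric_exp_eq_if_scaled_monom_evals_eq:
  fixes c :: "nat \<times> nat \<Rightarrow> real"
  assumes c_pos: "\<And>v. v \<in> Poly_Mapping.keys a \<Longrightarrow> c v > 0"
    and evals_eq: "\<And>s u. (\<And>i. s i > 0) \<Longrightarrow> (\<And>j. u j > 0) \<Longrightarrow>
      monom_eval (\<lambda>(i, j). s i * u j * c (i, j)) a = monom_eval (\<lambda>(i, j). s i * u j * c (i, j)) b"
  shows "toric_exp a = toric_exp b"
proof -
  have "monom_eval c a > 0"
    using c_pos by (rule monom_eval_pos)
  have "monom_eval c a = monom_eval c b"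
    using evals_eq[of "\<lambda>_. 1" "\<lambda>_. 1"] by simp
  have degree_eq: "(\<Sum>v\<in>Poly_Mapping.keys a. if Q v then Poly_Mapping.lookup a v else 0)
      = (\<Sum>v\<in>Poly_Mapping.keys b. if Q v then Poly_Mapping.lookup b v else 0)"
    if "monom_eval (\<lambda>v. (if Q v then 2 else 1) * c v) a = monom_eval (\<lambda>v. (if Q v then 2 else 1) * c v) b"
    for Q
    using that \<open>monom_eval c a > 0\<close> \<open>monom_eval c a = monom_eval c b\<close>
    by (simp add: monom_eval_mult_fun monom_eval_if_then_else_1)
  let ?t = "\<lambda>k n. if n = k then 2 else 1 :: real"
  have "(\<lambda>(i, j). ?t k i * 1 * c (i, j)) = (\<lambda>v. (if fst v = k then 2 else 1) * c v)"
    and "(\<lambda>(i, j). 1 * ?t k j * c (i, j)) = (\<lambda>v. (if snd v = k then 2 else 1) * c v)" for k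
    by (auto simp: fun_eq_iff)
  then have "Poly_Mapping.lookup (toric_exp a) (SV k) = Poly_Mapping.lookup (toric_exp b) (SV k)"
    and "Poly_Mapping.lookup (toric_exp a) (UV k) = Poly_Mapping.lookup (toric_exp b) (UV k)" for k
    using evals_eq[of "?t k" "\<lambda>_. 1"] evals_eq[of "\<lambda>_. 1" "?t k"]
    by (simp_all add: lookup_toric_exp_SV lookup_toric_exp_UV degree_eq)
  then show ?thesis
    by (intro poly_mapping_eqI) (metis su_var.exhaust)
qed

lemma toric_map_binomial_eq_0:
  assumes "toric_exp a = toric_exp b"
  shows "toric_map (mmonom a - mmonom b) = 0"
proof (cases "a = b")
  case False
  then have "Poly_Mapping.keys (mmonom a - mmonom b) = {a, b}"
    by (auto simp: mmonom_def in_keys_iff lookup_minus lookup_single when_def split: if_splits)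
  with False assms show ?thesis
    by (simp add: toric_map_def lookup_minus mmonom_def lookup_single when_def flip: single_add)
qed (simp add: toric_map_def)

lemma binomial_in_poly_ring:
  assumes "Poly_Mapping.keys a \<subseteq> X" and "Poly_Mapping.keys b \<subseteq> X"
  shows "mmonom a - mmonom b \<in> poly_ring X"
proof -
  have "Poly_Mapping.keys (mmonom a - mmonom b) \<subseteq> {a, b}"
    by (auto simp: mmonom_def in_keys_iff lookup_minus lookup_single when_def split: if_splits)
  then show ?thesis
    using assms by (auto simp: poly_ring_def)
qed

theorem lemma3p4:
  fixes P :: "'a::euclidean_space set"
    and pv :: "nat \<Rightarrow> 'a" and Fc :: "nat \<Rightarrow> 'a set"
    and a b :: "(nat \<times> nat) \<Rightarrow>\<^sub>0 nat"
  assumes "labelled_polytope P nv pv nf Fc"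
    and "Poly_Mapping.keys a \<subseteq> slack_vars nv pv nf Fc"
    and "Poly_Mapping.keys b \<subseteq> slack_vars nv pv nf Fc"
    and "mmonom a - mmonom b \<in> slack_ideal DIM('a) nv pv nf Fc"
  shows "mmonom a - mmonom b \<in> toric_ideal nv pv nf Fc"
proof -
  obtain w \<beta> where ineqs: "facet_inequalities nv pv nf Fc w \<beta>"
    using labelled_polytope_facet_inequalities[OF assms(1)] .
  define c where "c = (\<lambda>(i, j). \<beta> j - w j \<bullet> pv i)"
  have "c v > 0" if "v \<in> Poly_Mapping.keys a" for v
    using facet_inequalities_slack_pos[OF ineqs, of "fst v" "snd v"] assms(2) that
    by (auto simp: c_def case_prod_beta)
  moreover have "monom_eval (\<lambda>(i, j). s i * u j * c (i, j)) a = monom_eval (\<lambda>(i, j). s i * u j * c (i, j)) b"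
    if "\<And>i. s i > 0" "\<And>j. u j > 0" for s u
    using slack_ideal_binomial_scaled_monom_evals_eq[where s = s and u = u, OF ineqs that assms(4)]
    by (simp add: c_def)
  ultimately have "toric_exp a = toric_exp b"
    by (rule toric_exp_eq_if_scaled_monom_evals_eq)
  then show ?thesis
    using binomial_in_poly_ring[OF assms(2,3)] toric_map_binomial_eq_0
    by (simp add: toric_ideal_def)
qed

end
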